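(* Let $G$ be a finite connected multigraph and let $H$ be a connected subgraph of $G$. Then $$\tau(H)\,\tau(G/\!/H)\le \tau(G).$$
   Context: For a finite connected multigraph $K$, $\tau(K)$ denotes the number of spanning trees of $K$, where a spanning tree is a subgraph of $K$ that is maximal among subgraphs without cycles. For a subgraph $H$ of $G$, $G/\!/H$ denotes the multigraph obtained from $G$ by contracting all edges of $H$ (edges of $G$ not in $H$ whose endpoints both lie in $V(H)$ become loops). *)

theory Defs
  imports Main
begin

text \<open>A finite multigraph is given by a vertex set V, an edge set E and an endpoint
  map ends; the edge e joins fst (ends e) and snd (ends e) (orientation ignored;
  loops are edges with equal endpoints, parallel edges are distinct edges with
  the same endpoints).\<close>

definition multigraph :: "'v set \<Rightarrow> 'e set \<Rightarrow> ('e \<Rightarrow> 'v \<times> 'v) \<Rightarrow> bool" where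
  "multigraph V E ends \<longleftrightarrow> finite V \<and> finite E \<and>
     (\<forall>e\<in>E. fst (ends e) \<in> V \<and> snd (ends e) \<in> V)"

definition adj :: "'e set \<Rightarrow> ('e \<Rightarrow> 'v \<times> 'v) \<Rightarrow> 'v \<Rightarrow> 'v \<Rightarrow> bool" where
  "adj E ends u v \<longleftrightarrow> (\<exists>e\<in>E. ends e = (u, v) \<or> ends e = (v, u))"

definition connected_mg :: "'v set \<Rightarrow> 'e set \<Rightarrow> ('e \<Rightarrow> 'v \<times> 'v) \<Rightarrow> bool" where
  "connected_mg V E ends \<longleftrightarrow> V \<noteq> {} \<and> (\<forall>u\<in>V. \<forall>v\<in>V. (adj E ends)\<^sup>*\<^sup>* u v)"

definition submultigraph ::
  "'v set \<Rightarrow> 'e set \<Rightarrow> 'v set \<Rightarrow> 'e set \<Rightarrow> ('e \<Rightarrow> 'v \<times> 'v) \<Rightarrow> bool" where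
  "submultigraph VH EH VG EG ends \<longleftrightarrow> VH \<subseteq> VG \<and> EH \<subseteq> EG \<and>
     (\<forall>e\<in>EH. fst (ends e) \<in> VH \<and> snd (ends e) \<in> VH)"

text \<open>A cycle: distinct vertices v_0..v_{n-1} (n >= 1) and distinct edges e_0..e_{n-1}
  with e_i joining v_i and v_{(i+1) mod n}. (n = 1: a loop; n = 2: two parallel edges.)\<close>

definition has_cycle :: "'e set \<Rightarrow> ('e \<Rightarrow> 'v \<times> 'v) \<Rightarrow> bool" where
  "has_cycle F ends \<longleftrightarrow> (\<exists>vs es. length vs = length es \<and> length es \<ge> 1 \<and>
     distinct vs \<and> distinct es \<and> set es \<subseteq> F \<and>
     (\<forall>i<length es. ends (es ! i) = (vs ! i, vs ! ((i + 1) mod length es)) \<or>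
                    ends (es ! i) = (vs ! ((i + 1) mod length es), vs ! i)))"

text \<open>Spanning tree: a maximal cycle-free subgraph (it contains all vertices, so it is
  determined by its edge set).\<close>

definition spanning_tree :: "'e set \<Rightarrow> ('e \<Rightarrow> 'v \<times> 'v) \<Rightarrow> 'e set \<Rightarrow> bool" where
  "spanning_tree E ends T \<longleftrightarrow> T \<subseteq> E \<and> \<not> has_cycle T ends \<and>
     (\<forall>T'. T \<subseteq> T' \<and> T' \<subseteq> E \<and> \<not> has_cycle T' ends \<longrightarrow> T' = T)"

definition tau :: "'e set \<Rightarrow> ('e \<Rightarrow> 'v \<times> 'v) \<Rightarrow> nat" where
  "tau E ends = card {T. spanning_tree E ends T}"

text \<open>Contraction G//H: every vertex of V(H) is identified to the single vertex None,
  other vertices x become Some x; the edges are E(G) - E(H) with endpoints mapped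
  (edges with both ends in V(H) become loops at None).\<close>

definition contr_vertex :: "'v set \<Rightarrow> 'v \<Rightarrow> 'v option" where
  "contr_vertex VH x = (if x \<in> VH then None else Some x)"

definition contr_V :: "'v set \<Rightarrow> 'v set \<Rightarrow> 'v option set" where
  "contr_V VG VH = contr_vertex VH ` VG"

definition contr_E :: "'e set \<Rightarrow> 'e set \<Rightarrow> 'e set" where
  "contr_E EG EH = EG - EH"

definition contr_ends :: "'v set \<Rightarrow> ('e \<Rightarrow> 'v \<times> 'v) \<Rightarrow> 'e \<Rightarrow> 'v option \<times> 'v option" where
  "contr_ends VH ends e = map_prod (contr_vertex VH) (contr_vertex VH) (ends e)"

end

theory Submission
  imports Defs "HOL-Library.Transitive_Closure_Table"
begin

text \<open>A spanning tree of a multigraph is exactly an acyclic edge set that joins the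
  endpoints of every edge. If A is a spanning tree of H and B one of G//H, then A \<union> B is a
  spanning tree of G: a walk in G//H lifts to G by reconnecting its passages through the
  contracted vertex inside A (which joins all of V(H) because H is connected), and a cycle
  in A \<union> B either lies in A or, contracted, yields a cycle in B. Since A = (A \<union> B) \<inter> E(H)
  and B = (A \<union> B) - E(H), the map (A, B) \<mapsto> A \<union> B is injective, which gives the
  inequality.\<close>

abbreviation joins :: "'e set \<Rightarrow> ('e \<Rightarrow> 'v \<times> 'v) \<Rightarrow> 'v \<Rightarrow> 'v \<Rightarrow> bool" where
  "joins F ends \<equiv> (adj F ends)\<^sup>*\<^sup>*"

abbreviation joins_edge :: "'e set \<Rightarrow> ('e \<Rightarrow> 'v \<times> 'v) \<Rightarrow> 'e \<Rightarrow> bool" where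
  "joins_edge F ends e \<equiv> joins F ends (fst (ends e)) (snd (ends e))"

lemma symp_adj: "symp (adj F ends)"
  unfolding adj_def by (rule sympI) blast

lemma joins_sym: "joins F ends u v \<Longrightarrow> joins F ends v u"
  by (rule sympD[OF symp_rtranclp[OF symp_adj]])

lemma joins_mono: "F \<subseteq> F' \<Longrightarrow> joins F ends u v \<Longrightarrow> joins F' ends u v"
  by (erule rtranclp_mono[THEN predicate2D, rotated]) (unfold adj_def, blast)

lemma joins_edge: "e \<in> F \<Longrightarrow> joins_edge F ends e"
  by (rule r_into_rtranclp) (auto simp: adj_def prod_eq_iff)

lemma joins_if_joins_edges:
  assumes "\<And>e. e \<in> E \<Longrightarrow> joins_edge T ends e" and "joins E ends u v"
  shows "joins T ends u v"
  using assms(2)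
proof (induction rule: rtranclp_induct)
  case (step w z)
  then obtain e where "e \<in> E" "ends e = (w, z) \<or> ends e = (z, w)"
    unfolding adj_def by blast
  with assms(1) have "joins T ends w z"
    by (metis fst_conv snd_conv joins_sym)
  with step.IH show ?case by (rule rtranclp_trans)
qed simp

lemma has_cycle_if_joins_edge_minus:
  assumes f: "f \<in> F" and joined: "joins_edge (F - {f}) ends f"
  shows "has_cycle F ends"
proof (cases "fst (ends f) = snd (ends f)")
  case True
  then show ?thesis
    unfolding has_cycle_def using f
    by (intro exI[of _ "[fst (ends f)]"] exI[of _ "[f]"]) (auto simp: prod_eq_iff)
next
  case False
  \<comment> \<open>A simple path from one end of f to the other, closed up by f itself.\<close>
  let ?a = "fst (ends f)" and ?b = "snd (ends f)" and ?adj = "adj (F - {f}) ends"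
  obtain xs where path: "rtrancl_path ?adj ?a xs ?b" and dist: "distinct (?a # xs)"
    using joined by (auto simp: rtranclp_eq_rtrancl_path elim: rtrancl_path_distinct)
  define vs where "vs = ?a # xs"
  define m where "m = length xs"
  have "xs \<noteq> []" using path False by (auto elim: rtrancl_path.cases)
  then have last_vs: "vs ! m = ?b"
    using rtrancl_path_last[OF path] by (simp add: vs_def m_def last_conv_nth)
  have "\<exists>e. e \<in> F - {f} \<and> (ends e = (vs ! i, vs ! Suc i) \<or> ends e = (vs ! Suc i, vs ! i))"
    if "i < m" for i
    using rtrancl_path_nth[OF path, of i] that unfolding adj_def vs_def m_def by auto
  then obtain g where g: "\<And>i. i < m \<Longrightarrow> g i \<in> F - {f} \<and>
      (ends (g i) = (vs ! i, vs ! Suc i) \<or> ends (g i) = (vs ! Suc i, vs ! i))"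
    by metis
  define es where "es = map g [0..<m] @ [f]"
  have len: "length vs = Suc m" "length es = Suc m"
    by (simp_all add: vs_def m_def es_def)
  have "inj_on g {0..<m}"
  proof (rule inj_onI)
    fix i j assume "i \<in> {0..<m}" "j \<in> {0..<m}" "g i = g j"
    with g[of i] g[of j] have "vs ! i = vs ! j \<and> vs ! Suc i = vs ! Suc j \<or>
        vs ! i = vs ! Suc j \<and> vs ! Suc i = vs ! j"
      by auto
    with \<open>i \<in> {0..<m}\<close> \<open>j \<in> {0..<m}\<close> dist len show "i = j"
      by (auto simp: vs_def[symmetric] nth_eq_iff_index_eq)
  qed
  moreover have "f \<notin> g ` {0..<m}" using g by fastforce
  ultimately have "distinct es" by (simp add: es_def distinct_map)
  moreover have "set es \<subseteq> F" using g f by (auto simp: es_def)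
  moreover have "ends (es ! i) = (vs ! i, vs ! ((i + 1) mod length es)) \<or>
      ends (es ! i) = (vs ! ((i + 1) mod length es), vs ! i)" if "i < length es" for i
  proof (cases "i < m")
    case True
    then show ?thesis using g[of i] len by (simp add: es_def nth_append)
  next
    case False
    then have "i = m" using that len by simp
    then show ?thesis using last_vs len by (simp add: es_def nth_append vs_def prod_eq_iff)
  qed
  ultimately show ?thesis
    unfolding has_cycle_def using dist len by (intro exI[of _ vs] exI[of _ es]) (simp add: vs_def)
qed

lemma has_cycleE:
  assumes "has_cycle F ends"
  obtains C where "C \<subseteq> F" "C \<noteq> {}" "\<And>f. f \<in> C \<Longrightarrow> joins_edge (C - {f}) ends f"
proof -
  obtain vs es where len: "length vs = length es" "length es \<ge> 1"
    and dist: "distinct es" and sub: "set es \<subseteq> F"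
    and edge: "\<And>i. i < length es \<Longrightarrow>
      ends (es ! i) = (vs ! i, vs ! ((i + 1) mod length es)) \<or>
      ends (es ! i) = (vs ! ((i + 1) mod length es), vs ! i)"
    using assms unfolding has_cycle_def by blast
  define n where "n = length es"
  have around: "joins (set es - {es ! i}) ends (vs ! ((i + 1) mod n)) (vs ! ((i + 1 + k) mod n))"
    if i: "i < n" and k: "k < n" for i k
    using k
  proof (induction k)
    case (Suc k)
    let ?j = "(i + 1 + k) mod n"
    have j: "?j < n" "?j \<noteq> i"
    proof -
      show "?j < n" using i by simp
      show "?j \<noteq> i"
      proof (cases "i + 1 + k < n")
        case False
        then have "?j = i + 1 + k - n" using i Suc.prems by (simp add: mod_if)
        then show ?thesis using Suc.prems False by linarith
      qed simp
    qed
    then have "es ! ?j \<in> set es - {es ! i}"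
      using i dist by (simp add: n_def nth_eq_iff_index_eq)
    moreover have "(?j + 1) mod n = (i + 1 + Suc k) mod n" by (simp add: mod_Suc_eq)
    ultimately have "adj (set es - {es ! i}) ends (vs ! ?j) (vs ! ((i + 1 + Suc k) mod n))"
      using edge[of ?j] j unfolding adj_def n_def by metis
    with Suc show ?case by (simp add: rtranclp.rtrancl_into_rtrancl)
  qed simp
  show ?thesis
  proof
    show "set es \<subseteq> F" by (rule sub)
    show "set es \<noteq> {}" using len by auto
    fix f assume "f \<in> set es"
    then obtain i where i: "i < n" "f = es ! i" by (auto simp: n_def in_set_conv_nth)
    have "(i + 1 + (n - 1)) mod n = i" using i by simp
    then have "joins (set es - {f}) ends (vs ! i) (vs ! ((i + 1) mod n))"
      using around[of i "n - 1"] i by (auto intro: joins_sym)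
    then show "joins_edge (set es - {f}) ends f"
      using edge[of i] i by (auto simp: n_def intro: joins_sym)
  qed
qed

lemma has_cycle_iff_joins_edge_minus:
  "has_cycle F ends \<longleftrightarrow> (\<exists>f\<in>F. joins_edge (F - {f}) ends f)"
proof
  assume "has_cycle F ends"
  then obtain C f where "C \<subseteq> F" "f \<in> C" "joins_edge (C - {f}) ends f"
    by (elim has_cycleE) blast
  moreover from \<open>C \<subseteq> F\<close> have "C - {f} \<subseteq> F - {f}" by blast
  ultimately show "\<exists>f\<in>F. joins_edge (F - {f}) ends f"
    by (blast intro: joins_mono)
qed (blast intro: has_cycle_if_joins_edge_minus)

lemma joins_insert_cases:
  assumes "joins (insert e S) ends x y" and "ends e = (a, b)"
  shows "joins S ends x y \<or>
    joins S ends x a \<and> joins S ends b y \<or> joins S ends x b \<and> joins S ends a y"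
  using assms(1)
proof (induction rule: rtranclp_induct)
  case (step w z)
  then obtain g where g: "g \<in> insert e S" "ends g = (w, z) \<or> ends g = (z, w)"
    unfolding adj_def by blast
  show ?case
  proof (cases "g \<in> S")
    case True
    then have "adj S ends w z" using g unfolding adj_def by blast
    with step.IH show ?thesis by (meson rtranclp.rtrancl_into_rtrancl)
  next
    case False
    with g assms(2) have "w = a \<and> z = b \<or> w = b \<and> z = a" by auto
    with step.IH show ?thesis by auto
  qed
qed simp

lemma acyclic_insert:
  assumes acyclic: "\<not> has_cycle T ends" and new: "\<not> joins_edge T ends e"
  shows "\<not> has_cycle (insert e T) ends"
proof
  assume "has_cycle (insert e T) ends"
  then obtain f where f: "f \<in> insert e T" and joined: "joins_edge (insert e T - {f}) ends f"
    unfolding has_cycle_iff_joins_edge_minus by blast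
  have "e \<notin> T" using joins_edge[of e T ends] new by blast
  show False
  proof (cases "f = e")
    case True
    with joined \<open>e \<notin> T\<close> new show False by simp
  next
    case False
    with f have "f \<in> T" by simp
    obtain a b where ab: "ends e = (a, b)" by fastforce
    let ?S = "T - {f}" and ?x = "fst (ends f)" and ?y = "snd (ends f)"
    have "insert e T - {f} = insert e ?S" using False by blast
    with joined have "joins (insert e ?S) ends ?x ?y" by (simp only:)
    moreover have "\<not> joins ?S ends ?x ?y"
      using acyclic \<open>f \<in> T\<close> unfolding has_cycle_iff_joins_edge_minus by blast
    ultimately have
      "joins ?S ends ?x a \<and> joins ?S ends b ?y \<or> joins ?S ends ?x b \<and> joins ?S ends a ?y"
      using joins_insert_cases[of e ?S ends ?x ?y a b] ab by blast
    then have "joins T ends ?x a \<and> joins T ends b ?y \<or> joins T ends ?x b \<and> joins T ends a ?y"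
      using joins_mono[of ?S T ends] by blast
    moreover have xy: "joins T ends ?x ?y" by (rule joins_edge[OF \<open>f \<in> T\<close>])
    ultimately have "joins T ends a b"
    proof (elim disjE conjE)
      assume "joins T ends ?x a" "joins T ends b ?y"
      with xy show ?thesis by (meson joins_sym rtranclp_trans)
    next
      assume "joins T ends ?x b" "joins T ends a ?y"
      with xy show ?thesis by (meson joins_sym rtranclp_trans)
    qed
    with new ab show False by simp
  qed
qed

lemma spanning_tree_iff:
  "spanning_tree E ends T \<longleftrightarrow>
     T \<subseteq> E \<and> \<not> has_cycle T ends \<and> (\<forall>e\<in>E. joins_edge T ends e)"
proof
  assume "spanning_tree E ends T"
  then have "T \<subseteq> E" "\<not> has_cycle T ends"
    and maximal: "\<And>T'. T \<subseteq> T' \<Longrightarrow> T' \<subseteq> E \<Longrightarrow> \<not> has_cycle T' ends \<Longrightarrow> T' = T"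
    unfolding spanning_tree_def by blast+
  moreover have "joins_edge T ends e" if "e \<in> E" for e
  proof (rule ccontr)
    assume "\<not> joins_edge T ends e"
    with \<open>\<not> has_cycle T ends\<close> have "\<not> has_cycle (insert e T) ends" by (rule acyclic_insert)
    with maximal[of "insert e T"] \<open>T \<subseteq> E\<close> \<open>e \<in> E\<close> have "e \<in> T" by blast
    with \<open>\<not> joins_edge T ends e\<close> show False using joins_edge[of e T ends] by blast
  qed
  ultimately show "T \<subseteq> E \<and> \<not> has_cycle T ends \<and> (\<forall>e\<in>E. joins_edge T ends e)" by blast
next
  assume T: "T \<subseteq> E \<and> \<not> has_cycle T ends \<and> (\<forall>e\<in>E. joins_edge T ends e)"
  have "T' = T" if "T \<subseteq> T'" "T' \<subseteq> E" "\<not> has_cycle T' ends" for T'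
  proof (rule ccontr)
    assume "T' \<noteq> T"
    with \<open>T \<subseteq> T'\<close> obtain e where e: "e \<in> T'" "e \<notin> T" by blast
    with T \<open>T' \<subseteq> E\<close> have "joins_edge T ends e" by blast
    moreover have "T \<subseteq> T' - {e}" using e \<open>T \<subseteq> T'\<close> by blast
    ultimately have "joins_edge (T' - {e}) ends e" by (rule joins_mono[rotated])
    with \<open>e \<in> T'\<close> have "has_cycle T' ends" by (rule has_cycle_if_joins_edge_minus)
    with \<open>\<not> has_cycle T' ends\<close> show False by contradiction
  qed
  with T show "spanning_tree E ends T" unfolding spanning_tree_def by blast
qed

lemma contr_ends_eq:
  "contr_ends VH ends e = (contr_vertex VH (fst (ends e)), contr_vertex VH (snd (ends e)))"
  by (simp add: contr_ends_def map_prod_def split_beta)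

lemma joins_contract:
  assumes inside: "\<And>e. e \<in> S \<Longrightarrow> fst (ends e) \<in> VH \<and> snd (ends e) \<in> VH"
    and "joins (S \<union> F) ends x y"
  shows "joins F (contr_ends VH ends) (contr_vertex VH x) (contr_vertex VH y)"
  using assms(2)
proof (induction rule: rtranclp_induct)
  case (step w z)
  then obtain g where g: "g \<in> S \<union> F" "ends g = (w, z) \<or> ends g = (z, w)"
    unfolding adj_def by blast
  show ?case
  proof (cases "g \<in> S")
    case True
    with inside g have "w \<in> VH" "z \<in> VH" by force+
    then have "contr_vertex VH w = contr_vertex VH z" by (simp add: contr_vertex_def)
    with step.IH show ?thesis by simp
  next
    case False
    with g have "adj F (contr_ends VH ends) (contr_vertex VH w) (contr_vertex VH z)"
      unfolding adj_def contr_ends_eq by (metis UnE fst_conv snd_conv)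
    with step.IH show ?thesis by (rule rtranclp.rtrancl_into_rtrancl)
  qed
qed simp

lemma joins_lift:
  assumes joined: "\<And>u v. u \<in> VH \<Longrightarrow> v \<in> VH \<Longrightarrow> joins T ends u v"
    and "joins F (contr_ends VH ends) (contr_vertex VH x) (contr_vertex VH y)"
  shows "joins (F \<union> T) ends x y"
proof -
  have same: "joins (F \<union> T) ends u v" if "contr_vertex VH u = contr_vertex VH v" for u v
  proof (cases "u \<in> VH")
    case True
    with that have "v \<in> VH" by (auto simp: contr_vertex_def split: if_splits)
    with True joined show ?thesis by (blast intro: joins_mono[of T "F \<union> T"])
  next
    case False
    with that show ?thesis by (auto simp: contr_vertex_def split: if_splits)
  qed
  have "joins (F \<union> T) ends x y"
    if "joins F (contr_ends VH ends) (contr_vertex VH x) q" "contr_vertex VH y = q" for q y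
    using that
  proof (induction arbitrary: y rule: rtranclp_induct)
    case base
    then show ?case by (intro same) simp
  next
    case (step q' q)
    then obtain g where g: "g \<in> F"
      "contr_ends VH ends g = (q', q) \<or> contr_ends VH ends g = (q, q')"
      unfolding adj_def by blast
    obtain c d where cd: "ends g = (c, d)" by fastforce
    have "joins (F \<union> T) ends c d" "joins (F \<union> T) ends d c"
      using joins_edge[of g "F \<union> T" ends] g(1) cd by (auto intro: joins_sym)
    moreover from g(2) cd have "contr_vertex VH c = q' \<and> contr_vertex VH d = q \<or>
        contr_vertex VH d = q' \<and> contr_vertex VH c = q"
      unfolding contr_ends_eq by auto
    ultimately show ?case
      using step.IH same step.prems by (metis rtranclp_trans)
  qed
  with assms(2) show ?thesis by blast
qed

lemma spanning_tree_joins_vertices: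
  assumes "connected_mg V E ends" "spanning_tree E ends T" "u \<in> V" "v \<in> V"
  shows "joins T ends u v"
proof (rule joins_if_joins_edges)
  show "joins_edge T ends e" if "e \<in> E" for e
    using assms(2) that by (simp add: spanning_tree_iff)
  show "joins E ends u v"
    using assms(1,3,4) by (simp add: connected_mg_def)
qed

lemma acyclic_Un_contraction:
  assumes inside: "\<And>e. e \<in> A \<Longrightarrow> fst (ends e) \<in> VH \<and> snd (ends e) \<in> VH"
    and A: "\<not> has_cycle A ends" and B: "\<not> has_cycle B (contr_ends VH ends)"
  shows "\<not> has_cycle (A \<union> B) ends"
proof
  assume "has_cycle (A \<union> B) ends"
  then obtain C where C: "C \<subseteq> A \<union> B" "C \<noteq> {}"
    and redundant: "\<And>f. f \<in> C \<Longrightarrow> joins_edge (C - {f}) ends f"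
    by (elim has_cycleE) blast
  show False
  proof (cases "C \<subseteq> A")
    case True
    from \<open>C \<noteq> {}\<close> obtain f where "f \<in> C" by blast
    with True have "f \<in> A" and sub: "C - {f} \<subseteq> A - {f}" by blast+
    from redundant[OF \<open>f \<in> C\<close>] sub have "joins_edge (A - {f}) ends f"
      by (rule joins_mono[rotated])
    with \<open>f \<in> A\<close> have "has_cycle A ends" by (rule has_cycle_if_joins_edge_minus)
    with A show False by contradiction
  next
    case False
    then obtain f where "f \<in> C" "f \<notin> A" by blast
    with C(1) have "f \<in> B" and sub: "C - {f} \<subseteq> A \<union> (B - {f})" by blast+
    from redundant[OF \<open>f \<in> C\<close>] sub have "joins_edge (A \<union> (B - {f})) ends f"
      by (rule joins_mono[rotated])
    then have "joins (B - {f}) (contr_ends VH ends)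
        (contr_vertex VH (fst (ends f))) (contr_vertex VH (snd (ends f)))"
      using joins_contract[of A ends VH, OF inside] by blast
    then have "joins_edge (B - {f}) (contr_ends VH ends) f" by (simp add: contr_ends_eq)
    with \<open>f \<in> B\<close> have "has_cycle B (contr_ends VH ends)" by (rule has_cycle_if_joins_edge_minus)
    with B show False by contradiction
  qed
qed

lemma spanning_tree_Un_contraction:
  assumes sub: "submultigraph VH EH VG EG ends" and conn: "connected_mg VH EH ends"
    and A: "spanning_tree EH ends A"
    and B: "spanning_tree (contr_E EG EH) (contr_ends VH ends) B"
  shows "spanning_tree EG ends (A \<union> B)"
  unfolding spanning_tree_iff
proof (intro conjI ballI)
  have inside: "fst (ends e) \<in> VH \<and> snd (ends e) \<in> VH" if "e \<in> EH" for e
    using sub that unfolding submultigraph_def by blast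
  from A have "A \<subseteq> EH" "\<not> has_cycle A ends" unfolding spanning_tree_iff by blast+
  from B have "B \<subseteq> EG - EH" "\<not> has_cycle B (contr_ends VH ends)"
    unfolding spanning_tree_iff contr_E_def by blast+
  show "A \<union> B \<subseteq> EG"
    using \<open>A \<subseteq> EH\<close> \<open>B \<subseteq> EG - EH\<close> sub by (auto simp: submultigraph_def)
  show "\<not> has_cycle (A \<union> B) ends"
    using acyclic_Un_contraction \<open>A \<subseteq> EH\<close> inside \<open>\<not> has_cycle A ends\<close>
      \<open>\<not> has_cycle B (contr_ends VH ends)\<close> by (metis subsetD)
  fix e assume "e \<in> EG"
  show "joins_edge (A \<union> B) ends e"
  proof (cases "e \<in> EH")
    case True
    with A have "joins_edge A ends e" by (simp add: spanning_tree_iff)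
    then show ?thesis by (rule joins_mono[rotated]) blast
  next
    case False
    with B \<open>e \<in> EG\<close> have "joins_edge B (contr_ends VH ends) e"
      by (simp add: spanning_tree_iff contr_E_def)
    then have "joins B (contr_ends VH ends)
        (contr_vertex VH (fst (ends e))) (contr_vertex VH (snd (ends e)))"
      by (simp add: contr_ends_eq)
    with spanning_tree_joins_vertices[OF conn A]
    have "joins (B \<union> A) ends (fst (ends e)) (snd (ends e))" by (rule joins_lift)
    then show ?thesis by (simp only: Un_commute)
  qed
qed

theorem lemma3p1:
  fixes VG VH :: "'v set" and EG EH :: "'e set" and ends :: "'e \<Rightarrow> 'v \<times> 'v"
  assumes "multigraph VG EG ends"
    and "connected_mg VG EG ends"
    and "submultigraph VH EH VG EG ends"
    and "connected_mg VH EH ends"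
  shows "tau EH ends * tau (contr_E EG EH) (contr_ends VH ends) \<le> tau EG ends"
proof -
  let ?S\<^sub>H = "{A. spanning_tree EH ends A}"
    and ?S\<^sub>C = "{B. spanning_tree (contr_E EG EH) (contr_ends VH ends) B}"
    and ?S\<^sub>G = "{T. spanning_tree EG ends T}"
  have "finite ?S\<^sub>G"
    using assms(1)
    by (auto simp: multigraph_def spanning_tree_def intro: finite_subset[of _ "Pow EG"])
  have "inj_on (\<lambda>(A, B). A \<union> B) (?S\<^sub>H \<times> ?S\<^sub>C)"
  proof (rule inj_onI, clarsimp)
    fix A B A' B'
    assume "spanning_tree EH ends A" "spanning_tree EH ends A'"
      "spanning_tree (contr_E EG EH) (contr_ends VH ends) B"
      "spanning_tree (contr_E EG EH) (contr_ends VH ends) B'"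
    then have "A \<subseteq> EH" "A' \<subseteq> EH" "B \<inter> EH = {}" "B' \<inter> EH = {}"
      by (auto simp: spanning_tree_def contr_E_def)
    moreover assume "A \<union> B = A' \<union> B'"
    ultimately show "A = A' \<and> B = B'" by blast
  qed
  then have "tau EH ends * tau (contr_E EG EH) (contr_ends VH ends) =
      card ((\<lambda>(A, B). A \<union> B) ` (?S\<^sub>H \<times> ?S\<^sub>C))"
    by (simp add: tau_def card_image card_cartesian_product)
  also have "\<dots> \<le> card ?S\<^sub>G"
    using spanning_tree_Un_contraction[OF assms(3,4)] \<open>finite ?S\<^sub>G\<close>
    by (intro card_mono) auto
  finally show ?thesis by (simp add: tau_def)
qed

end
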